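(* Let $\Sigma=(I,X,\mathcal U,\phi,Y,h)$ be a forward complete control system with outputs. Then the following are equivalent: (1) $\Sigma$ is ISS and $h$ is $\mathcal K$-bounded; (2) $\Sigma$ is IOS and IOSS.
   Context: Let $I\in\{\mathbb N_0,\mathbb R_0^+\}$. A forward complete control system with outputs $\Sigma=(I,X,\mathcal U,\phi,Y,h)$ consists of: a normed space $(X,\|\cdot\|_X)$; a vector space $U$ and a normed linear subspace $(\mathcal U,\|\cdot\|_{\mathcal U})$ of $\{u:I\to U\}$ such that for all $u\in\mathcal U,\tau\in I$, $u(\cdot+\tau)\in\mathcal U$ with $\|u(\cdot+\tau)\|_{\mathcal U}\le\|u\|_{\mathcal U}$, and for $t_2\ge t_1\ge 0$ the function $u|_{[t_1,t_2]}$ ($u$ on $[t_1,t_2]$, $0$ elsewhere) lies in $\mathcal U$ with $\|u|_{[t_1,t_2]}\|_{\mathcal U}\le\|u\|_{\mathcal U}$; a map $\phi:I\times X\times\mathcal U\to X$ with $\phi(0,x,u)=x$, causality (if $u,\tilde u$ agree on $[0,t]$ then $\phi(t,x,u)=\phi(t,x,\tilde u)$), and cocycle property $\phi(t+s,x,u)=\phi(s,\phi(t,x,u),u(t+\cdot))$; a normed space $Y$ and $h:X\times U\to Y$. Write $y(t,x,u)=h(\phi(t,x,u),u(t))$. $\mathcal K,\mathcal K_\infty,\mathcal{KL}$ are the standard comparison function classes. ISS: $\exists\beta\in\mathcal{KL},\gamma\in\mathcal K_\infty$ with $\|\phi(t,x,u)\|_X\le\beta(\|x\|_X,t)+\gamma(\|u\|_{\mathcal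 U})$ for all $x\in X,u\in\mathcal U,t\in I$. IOS: $\exists\beta\in\mathcal{KL},\gamma\in\mathcal K_\infty$ with $\|y(t,x,u)\|_Y\le\beta(\|x\|_X,t)+\gamma(\|u\|_{\mathcal U})$ for all $x,u,t$. IOSS: $\exists\beta\in\mathcal{KL},\gamma_1,\gamma_2\in\mathcal K$ with $\|\phi(t,x,u)\|_X\le\beta(\|x\|_X,t)+\gamma_1(\|u|_{[0,t]}\|_{\mathcal U})+\gamma_2(\sup_{s\in[0,t]}\|y(s,x,u)\|_Y)$ for all $x,u,t$. $h$ is $\mathcal K$-bounded: there exist $\sigma_1,\gamma_1\in\mathcal K$ with $\|h(x,u(0))\|_Y\le\sigma_1(\|x\|_X)+\gamma_1(\|u\|_{\mathcal U})$ for all $x\in X,u\in\mathcal U$. *)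

theory Defs
  imports "HOL-Analysis.Analysis"
begin

definition class_K :: "(real \<Rightarrow> real) \<Rightarrow> bool" where
  "class_K \<gamma> \<longleftrightarrow> continuous_on {0..} \<gamma> \<and> strict_mono_on {0..} \<gamma> \<and> \<gamma> 0 = 0"

definition class_Kinf :: "(real \<Rightarrow> real) \<Rightarrow> bool" where
  "class_Kinf \<gamma> \<longleftrightarrow> class_K \<gamma> \<and> filterlim \<gamma> at_top at_top"

definition class_KL :: "(real \<Rightarrow> real \<Rightarrow> real) \<Rightarrow> bool" where
  "class_KL \<beta> \<longleftrightarrow>
     (\<forall>t\<ge>0. class_K (\<lambda>r. \<beta> r t)) \<and>
     (\<forall>r\<ge>0. antimono_on {0..} (\<lambda>t. \<beta> r t) \<and> ((\<lambda>t. \<beta> r t) \<longlongrightarrow> 0) at_top)"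

text \<open>Time axis I: if disc then I = N_0 (embedded in the reals), else I = [0,\<infinity>).
  Inputs are functions real => 'u that vanish outside I.\<close>

definition time_set :: "bool \<Rightarrow> real set" where
  "time_set disc = (if disc then range real else {0..})"

definition shift_inp :: "bool \<Rightarrow> (real \<Rightarrow> 'u::real_vector) \<Rightarrow> real \<Rightarrow> real \<Rightarrow> 'u" where
  "shift_inp disc u \<tau> = (\<lambda>s. if s \<in> time_set disc then u (s + \<tau>) else 0)"

definition restr_inp :: "(real \<Rightarrow> 'u::real_vector) \<Rightarrow> real \<Rightarrow> real \<Rightarrow> real \<Rightarrow> 'u" where
  "restr_inp u t1 t2 = (\<lambda>s. if t1 \<le> s \<and> s \<le> t2 then u s else 0)"

definition control_system ::
  "bool \<Rightarrow> (real \<Rightarrow> 'u::real_vector) set \<Rightarrow> ((real \<Rightarrow> 'u) \<Rightarrow> real)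
   \<Rightarrow> (real \<Rightarrow> 'x::real_normed_vector \<Rightarrow> (real \<Rightarrow> 'u) \<Rightarrow> 'x) \<Rightarrow> bool" where
  "control_system disc Uc nU \<phi> \<longleftrightarrow>
     \<comment> \<open>inputs are functions on I (zero outside I)\<close>
     (\<forall>u\<in>Uc. \<forall>s. s \<notin> time_set disc \<longrightarrow> u s = 0) \<and>
     \<comment> \<open>Uc is a linear subspace\<close>
     (\<lambda>s. 0) \<in> Uc \<and>
     (\<forall>u\<in>Uc. \<forall>v\<in>Uc. (\<lambda>s. u s + v s) \<in> Uc) \<and>
     (\<forall>u\<in>Uc. \<forall>c. (\<lambda>s. c *\<^sub>R u s) \<in> Uc) \<and>
     \<comment> \<open>nU is a norm on Uc\<close>
     (\<forall>u\<in>Uc. 0 \<le> nU u) \<and>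
     (\<forall>u\<in>Uc. nU u = 0 \<longleftrightarrow> u = (\<lambda>s. 0)) \<and>
     (\<forall>u\<in>Uc. \<forall>c. nU (\<lambda>s. c *\<^sub>R u s) = \<bar>c\<bar> * nU u) \<and>
     (\<forall>u\<in>Uc. \<forall>v\<in>Uc. nU (\<lambda>s. u s + v s) \<le> nU u + nU v) \<and>
     \<comment> \<open>shift invariance\<close>
     (\<forall>u\<in>Uc. \<forall>\<tau>\<in>time_set disc.
        shift_inp disc u \<tau> \<in> Uc \<and> nU (shift_inp disc u \<tau>) \<le> nU u) \<and>
     \<comment> \<open>restriction (concatenation with zero)\<close>
     (\<forall>u\<in>Uc. \<forall>t1 t2. 0 \<le> t1 \<longrightarrow> t1 \<le> t2 \<longrightarrow>
        restr_inp u t1 t2 \<in> Uc \<and> nU (restr_inp u t1 t2) \<le> nU u) \<and>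
     \<comment> \<open>identity property\<close>
     (\<forall>x. \<forall>u\<in>Uc. \<phi> 0 x u = x) \<and>
     \<comment> \<open>causality\<close>
     (\<forall>t\<in>time_set disc. \<forall>x. \<forall>u\<in>Uc. \<forall>v\<in>Uc.
        (\<forall>s\<in>time_set disc. s \<le> t \<longrightarrow> u s = v s) \<longrightarrow> \<phi> t x u = \<phi> t x v) \<and>
     \<comment> \<open>cocycle property\<close>
     (\<forall>t\<in>time_set disc. \<forall>s\<in>time_set disc. \<forall>x. \<forall>u\<in>Uc.
        \<phi> (t + s) x u = \<phi> s (\<phi> t x u) (shift_inp disc u t))"

definition out :: "(real \<Rightarrow> 'x \<Rightarrow> (real \<Rightarrow> 'u) \<Rightarrow> 'x) \<Rightarrow> ('x \<Rightarrow> 'u \<Rightarrow> 'y)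
                   \<Rightarrow> real \<Rightarrow> 'x \<Rightarrow> (real \<Rightarrow> 'u) \<Rightarrow> 'y" where
  "out \<phi> h t x u = h (\<phi> t x u) (u t)"

definition ISS ::
  "bool \<Rightarrow> (real \<Rightarrow> 'u::real_vector) set \<Rightarrow> ((real \<Rightarrow> 'u) \<Rightarrow> real)
   \<Rightarrow> (real \<Rightarrow> 'x::real_normed_vector \<Rightarrow> (real \<Rightarrow> 'u) \<Rightarrow> 'x) \<Rightarrow> bool" where
  "ISS disc Uc nU \<phi> \<longleftrightarrow> (\<exists>\<beta> \<gamma>. class_KL \<beta> \<and> class_Kinf \<gamma> \<and>
     (\<forall>x. \<forall>u\<in>Uc. \<forall>t\<in>time_set disc. norm (\<phi> t x u) \<le> \<beta> (norm x) t + \<gamma> (nU u)))"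

definition IOS ::
  "bool \<Rightarrow> (real \<Rightarrow> 'u::real_vector) set \<Rightarrow> ((real \<Rightarrow> 'u) \<Rightarrow> real)
   \<Rightarrow> (real \<Rightarrow> 'x::real_normed_vector \<Rightarrow> (real \<Rightarrow> 'u) \<Rightarrow> 'x)
   \<Rightarrow> ('x \<Rightarrow> 'u \<Rightarrow> 'y::real_normed_vector) \<Rightarrow> bool" where
  "IOS disc Uc nU \<phi> h \<longleftrightarrow> (\<exists>\<beta> \<gamma>. class_KL \<beta> \<and> class_Kinf \<gamma> \<and>
     (\<forall>x. \<forall>u\<in>Uc. \<forall>t\<in>time_set disc. norm (out \<phi> h t x u) \<le> \<beta> (norm x) t + \<gamma> (nU u)))"

text \<open>IOSS. If the output is unbounded on [0,t] the right-hand side is +\<infinity>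
  (convention gamma(\<infinity>) = \<infinity>) and the estimate is void; hence the bdd_above guard.\<close>

definition IOSS ::
  "bool \<Rightarrow> (real \<Rightarrow> 'u::real_vector) set \<Rightarrow> ((real \<Rightarrow> 'u) \<Rightarrow> real)
   \<Rightarrow> (real \<Rightarrow> 'x::real_normed_vector \<Rightarrow> (real \<Rightarrow> 'u) \<Rightarrow> 'x)
   \<Rightarrow> ('x \<Rightarrow> 'u \<Rightarrow> 'y::real_normed_vector) \<Rightarrow> bool" where
  "IOSS disc Uc nU \<phi> h \<longleftrightarrow> (\<exists>\<beta> \<gamma>1 \<gamma>2. class_KL \<beta> \<and> class_K \<gamma>1 \<and> class_K \<gamma>2 \<and>
     (\<forall>x. \<forall>u\<in>Uc. \<forall>t\<in>time_set disc.
        bdd_above ((\<lambda>s. norm (out \<phi> h s x u)) ` {s\<in>time_set disc. s \<le> t}) \<longrightarrow>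
        norm (\<phi> t x u) \<le> \<beta> (norm x) t + \<gamma>1 (nU (restr_inp u 0 t))
          + \<gamma>2 (SUP s\<in>{s\<in>time_set disc. s \<le> t}. norm (out \<phi> h s x u))))"

definition K_bounded ::
  "(real \<Rightarrow> 'u::real_vector) set \<Rightarrow> ((real \<Rightarrow> 'u) \<Rightarrow> real)
   \<Rightarrow> ('x::real_normed_vector \<Rightarrow> 'u \<Rightarrow> 'y::real_normed_vector) \<Rightarrow> bool" where
  "K_bounded Uc nU h \<longleftrightarrow> (\<exists>\<sigma>1 \<gamma>1. class_K \<sigma>1 \<and> class_K \<gamma>1 \<and>
     (\<forall>x. \<forall>u\<in>Uc. norm (h x (u 0)) \<le> \<sigma>1 (norm x) + \<gamma>1 (nU u)))"

end

theory Submission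
  imports Defs
begin

(* ISS composed with the K-bound of h (evaluated on the shifted input) gives IOS, and ISS gives
   IOSS with gamma2 = id, since by causality phi(t,x,u) only depends on u restricted to [0,t].
   Conversely, IOS at t = 0 is the K-boundedness of h. For ISS, IOS bounds the output on [0,t]
   by beta_y(|x|,0) + gamma_y(|u|), so IOSS yields a uniform bound
   |phi(t,x,u)| <= overshoot(|x|) + input_gain(|u|). Restarting at tau = floor(t/2) by the
   cocycle property, the output on [tau,t] is bounded by beta_y(|x|,tau) + gamma_y(|u|), and
   IOSS applied from the state phi(tau,x,u), whose norm is bounded uniformly, gives a bound
   decaying in t. *)

lemma class_K_less: "class_K f \<Longrightarrow> 0 \<le> a \<Longrightarrow> a < b \<Longrightarrow> f a < f b"
  unfolding class_K_def by (auto intro: strict_mono_onD)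

lemma class_K_le: "class_K f \<Longrightarrow> 0 \<le> a \<Longrightarrow> a \<le> b \<Longrightarrow> f a \<le> f b"
  using class_K_less[of f a b] by (cases "a = b") auto

lemma class_K_nonneg: "class_K f \<Longrightarrow> 0 \<le> a \<Longrightarrow> 0 \<le> f a"
  using class_K_le[of f 0 a] by (simp add: class_K_def)

lemma class_K_id: "class_K (\<lambda>s. s)"
  unfolding class_K_def by (auto intro: strict_mono_onI continuous_intros)

lemma class_K_cmult: "0 < c \<Longrightarrow> class_K (\<lambda>s. c * s)"
  unfolding class_K_def by (auto intro: strict_mono_onI continuous_intros)

lemma class_K_comp:
  assumes "class_K f" "class_K g"
  shows "class_K (\<lambda>s. f (g s))"
proof -
  have "g ` {0..} \<subseteq> {0..}"
    using class_K_nonneg[OF assms(2)] by auto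
  then have "continuous_on {0..} (\<lambda>s. f (g s))"
    using continuous_on_compose2[of "{0..}" f "{0..}" g] assms unfolding class_K_def by auto
  moreover have "strict_mono_on {0..} (\<lambda>s. f (g s))"
    by (rule strict_mono_onI) (use assms class_K_less class_K_nonneg in auto)
  ultimately show ?thesis
    using assms unfolding class_K_def by auto
qed

lemma class_K_add:
  assumes "class_K f" "class_K g"
  shows "class_K (\<lambda>s. f s + g s)"
  using assms unfolding class_K_def
  by (auto intro!: strict_mono_onI continuous_intros add_strict_mono dest: strict_mono_onD)

lemma class_Kinf_add_id:
  assumes f: "class_K f"
  shows "class_Kinf (\<lambda>s. f s + s)"
  unfolding class_Kinf_def
proof
  show "class_K (\<lambda>s. f s + s)"
    using f
    using class_K_add class_K_id by blast
  have "\<forall>\<^sub>F s in at_top. s \<le> f s + s"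
    using eventually_ge_at_top[of "0::real"] by eventually_elim (use class_K_nonneg[OF f] in auto)
  then show "filterlim (\<lambda>s. f s + s) at_top at_top"
    by (rule filterlim_at_top_mono[OF filterlim_ident])
qed

lemma class_K_weak_triangle:
  assumes "class_K f" "0 \<le> a" "0 \<le> b"
  shows "f (a + b) \<le> f (2 * a) + f (2 * b)"
  using class_K_le[OF assms(1), of "a + b" "2 * max a b"] class_K_nonneg[OF assms(1), of "2 * a"]
    class_K_nonneg[OF assms(1), of "2 * b"] assms(2,3)
  by (cases "a \<le> b") (auto simp: max_def)

lemma class_KL_K: "class_KL \<beta> \<Longrightarrow> 0 \<le> t \<Longrightarrow> class_K (\<lambda>r. \<beta> r t)"
  by (simp add: class_KL_def)

lemma class_KL_nonneg: "class_KL \<beta> \<Longrightarrow> 0 \<le> r \<Longrightarrow> 0 \<le> t \<Longrightarrow> 0 \<le> \<beta> r t"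
  using class_K_nonneg[OF class_KL_K] by blast

lemma class_KL_le: "class_KL \<beta> \<Longrightarrow> 0 \<le> r \<Longrightarrow> r \<le> r' \<Longrightarrow> 0 \<le> t \<Longrightarrow> \<beta> r t \<le> \<beta> r' t"
  using class_K_le[OF class_KL_K] by blast

lemma class_KL_antimono:
  assumes "class_KL \<beta>" "0 \<le> r" "0 \<le> t" "t \<le> t'"
  shows "\<beta> r t' \<le> \<beta> r t"
proof -
  have "antimono_on {0..} (\<beta> r)"
    using assms(1,2) unfolding class_KL_def by blast
  from monotone_onD[OF this, of t t'] show ?thesis
    using assms(3,4) by simp
qed

lemma class_KL_tendsto: "class_KL \<beta> \<Longrightarrow> 0 \<le> r \<Longrightarrow> ((\<lambda>t. \<beta> r t) \<longlongrightarrow> 0) at_top"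
  unfolding class_KL_def by auto

lemma class_KL_split_le:
  assumes \<beta>: "class_KL \<beta>" and "0 \<le> r" "r \<le> a + b" "0 \<le> a" "0 \<le> b" "0 \<le> t" "t \<le> t'"
  shows "\<beta> r t' \<le> \<beta> (2 * a) t + \<beta> (2 * b) 0"
proof -
  have "\<beta> r t' \<le> \<beta> (a + b) t"
    using class_KL_antimono[OF \<beta> \<open>0 \<le> r\<close> \<open>0 \<le> t\<close> \<open>t \<le> t'\<close>]
      class_KL_le[OF \<beta> \<open>0 \<le> r\<close> \<open>r \<le> a + b\<close> \<open>0 \<le> t\<close>]
    by linarith
  also have "\<dots> \<le> \<beta> (2 * a) t + \<beta> (2 * b) t"
    using class_K_weak_triangle[OF class_KL_K[OF \<beta> \<open>0 \<le> t\<close>] \<open>0 \<le> a\<close> \<open>0 \<le> b\<close>] .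
  also have "\<dots> \<le> \<beta> (2 * a) t + \<beta> (2 * b) 0"
    using class_KL_antimono[OF \<beta> _ order_refl \<open>0 \<le> t\<close>, of "2 * b"] \<open>0 \<le> b\<close> by simp
  finally show ?thesis .
qed

lemma class_KLI:
  assumes "\<And>t. 0 \<le> t \<Longrightarrow> class_K (\<lambda>r. \<beta> r t)"
    and "\<And>r t t'. 0 \<le> r \<Longrightarrow> 0 \<le> t \<Longrightarrow> t \<le> t' \<Longrightarrow> \<beta> r t' \<le> \<beta> r t"
    and "\<And>r. 0 \<le> r \<Longrightarrow> ((\<lambda>t. \<beta> r t) \<longlongrightarrow> 0) at_top"
  shows "class_KL \<beta>"
  unfolding class_KL_def using assms by (auto intro: monotone_onI)

lemma class_KL_add:
  assumes "class_KL \<beta>1" "class_KL \<beta>2"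
  shows "class_KL (\<lambda>r t. \<beta>1 r t + \<beta>2 r t)"
proof (rule class_KLI)
  show "class_K (\<lambda>r. \<beta>1 r t + \<beta>2 r t)" if "0 \<le> t" for t
    using class_K_add[OF class_KL_K[OF assms(1)] class_KL_K[OF assms(2)]] that by blast
  show "\<beta>1 r t' + \<beta>2 r t' \<le> \<beta>1 r t + \<beta>2 r t" if "0 \<le> r" "0 \<le> t" "t \<le> t'" for r t t'
    using class_KL_antimono[OF assms(1) that] class_KL_antimono[OF assms(2) that] by (rule add_mono)
  show "((\<lambda>t. \<beta>1 r t + \<beta>2 r t) \<longlongrightarrow> 0) at_top" if "0 \<le> r" for r
    using tendsto_add_zero[OF class_KL_tendsto[OF assms(1) that] class_KL_tendsto[OF assms(2) that]] .
qed

lemma class_KL_comp_K_outer: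
  assumes f: "class_K f" and \<beta>: "class_KL \<beta>"
  shows "class_KL (\<lambda>r t. f (\<beta> r t))"
proof (rule class_KLI)
  show "class_K (\<lambda>r. f (\<beta> r t))" if "0 \<le> t" for t
    using class_K_comp[OF f class_KL_K[OF \<beta> that]] .
  show "f (\<beta> r t') \<le> f (\<beta> r t)" if "0 \<le> r" "0 \<le> t" "t \<le> t'" for r t t'
    using class_K_le[OF f] class_KL_antimono[OF \<beta>] class_KL_nonneg[OF \<beta>] that by auto
  show "((\<lambda>t. f (\<beta> r t)) \<longlongrightarrow> 0) at_top" if r: "0 \<le> r" for r
  proof -
    have ev: "\<forall>\<^sub>F t in at_top. \<beta> r t \<in> {0..}"
      using eventually_ge_at_top[of "0::real"]
      by eventually_elim (use class_KL_nonneg[OF \<beta> r] in auto)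
    have cont: "continuous_on {0..} f"
      using f by (simp add: class_K_def)
    have "((\<lambda>t. f (\<beta> r t)) \<longlongrightarrow> f 0) at_top"
      using continuous_on_tendsto_compose[OF cont class_KL_tendsto[OF \<beta> r] _ ev] by simp
    then show ?thesis
      using f by (simp add: class_K_def)
  qed
qed

lemma class_KL_comp_K_inner:
  assumes g: "class_K g" and \<beta>: "class_KL \<beta>"
  shows "class_KL (\<lambda>r t. \<beta> (g r) t)"
proof (rule class_KLI)
  show "class_K (\<lambda>r. \<beta> (g r) t)" if "0 \<le> t" for t
    using class_K_comp[OF class_KL_K[OF \<beta> that] g] .
  show "\<beta> (g r) t' \<le> \<beta> (g r) t" if "0 \<le> r" "0 \<le> t" "t \<le> t'" for r t t'
    using class_KL_antimono[OF \<beta> class_K_nonneg[OF g that(1)] that(2,3)] .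
  show "((\<lambda>t. \<beta> (g r) t) \<longlongrightarrow> 0) at_top" if "0 \<le> r" for r
    using class_KL_tendsto[OF \<beta> class_K_nonneg[OF g that]] .
qed

lemma class_KL_reparam_time:
  assumes \<beta>: "class_KL \<beta>" and \<tau>_nonneg: "\<And>t. 0 \<le> t \<Longrightarrow> 0 \<le> \<tau> t"
    and \<tau>_mono: "\<And>t t'. 0 \<le> t \<Longrightarrow> t \<le> t' \<Longrightarrow> \<tau> t \<le> \<tau> t'"
    and \<tau>_lim: "filterlim \<tau> at_top at_top"
  shows "class_KL (\<lambda>r t. \<beta> r (\<tau> t))"
proof (rule class_KLI)
  show "class_K (\<lambda>r. \<beta> r (\<tau> t))" if "0 \<le> t" for t
    using class_KL_K[OF \<beta> \<tau>_nonneg[OF that]] .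
  show "\<beta> r (\<tau> t') \<le> \<beta> r (\<tau> t)" if "0 \<le> r" "0 \<le> t" "t \<le> t'" for r t t'
    using class_KL_antimono[OF \<beta> that(1) \<tau>_nonneg[OF that(2)] \<tau>_mono[OF that(2,3)]] .
  show "((\<lambda>t. \<beta> r (\<tau> t)) \<longlongrightarrow> 0) at_top" if "0 \<le> r" for r
    using filterlim_compose[OF class_KL_tendsto[OF \<beta> that] \<tau>_lim] .
qed

lemma time_set_nonneg: "t \<in> time_set disc \<Longrightarrow> 0 \<le> t"
  by (auto simp: time_set_def split: if_splits)

lemma zero_in_time_set: "0 \<in> time_set disc"
  by (auto simp: time_set_def)

lemma time_set_add: "a \<in> time_set disc \<Longrightarrow> b \<in> time_set disc \<Longrightarrow> a + b \<in> time_set disc"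
  by (auto simp: time_set_def split: if_splits) (metis of_nat_add rangeI)

lemma shift_inp_apply: "s \<in> time_set disc \<Longrightarrow> shift_inp disc u \<tau> s = u (s + \<tau>)"
  by (simp add: shift_inp_def)

text \<open>Rounding down makes the restart time of the ISS estimate a time instant for both
  time axes.\<close>

definition half_time :: "real \<Rightarrow> real" where
  "half_time t = real (nat \<lfloor>t / 2\<rfloor>)"

lemma half_time_bounds:
  assumes "0 \<le> t"
  shows "0 \<le> half_time t" "half_time t \<le> t - half_time t" "t / 2 - 1 \<le> half_time t"
  using assms unfolding half_time_def by (auto, linarith+)

lemma half_time_mono: "0 \<le> t \<Longrightarrow> t \<le> t' \<Longrightarrow> half_time t \<le> half_time t'"
  unfolding half_time_def by (intro of_nat_mono nat_mono floor_mono) auto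

lemma filterlim_half_time: "filterlim half_time at_top at_top"
  unfolding filterlim_at_top
proof
  fix Z :: real
  show "\<forall>\<^sub>F t in at_top. Z \<le> half_time t"
    using eventually_ge_at_top[of "max 0 (2 * Z + 2)"]
    by eventually_elim (use half_time_bounds(3) in fastforce)
qed

lemma half_time_in_time_set:
  assumes "t \<in> time_set disc"
  shows "half_time t \<in> time_set disc \<and> t - half_time t \<in> time_set disc"
proof (cases disc)
  case True
  then obtain n where n: "t = real n"
    using assms by (auto simp: time_set_def)
  have "\<lfloor>real n / 2\<rfloor> = int (n div 2)"
    using floor_divide_of_nat_eq[of n 2] by simp
  then have "half_time t = real (n div 2)"
    by (simp add: half_time_def n)
  moreover have "real n - real (n div 2) \<in> range real"
    by (metis of_nat_diff div_le_dividend rangeI)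
  ultimately show ?thesis
    using True n by (auto simp: time_set_def)
next
  case False
  then show ?thesis
    using assms half_time_bounds[of t] by (auto simp: time_set_def)
qed

lemma ISSI:
  assumes "class_KL \<beta>" "class_K \<gamma>"
    and "\<And>x u t. u \<in> Uc \<Longrightarrow> t \<in> time_set disc \<Longrightarrow> norm (\<phi> t x u) \<le> \<beta> (norm x) t + \<gamma> (nU u)"
    and "\<And>u. u \<in> Uc \<Longrightarrow> 0 \<le> nU u"
  shows "ISS disc Uc nU \<phi>"
  unfolding ISS_def
proof (intro exI conjI ballI allI)
  show "class_KL \<beta>" "class_Kinf (\<lambda>v. \<gamma> v + v)"
    using assms(1,2) class_Kinf_add_id by auto
  show "norm (\<phi> t x u) \<le> \<beta> (norm x) t + (\<gamma> (nU u) + nU u)"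
    if "u \<in> Uc" "t \<in> time_set disc" for x u t
    using assms(3)[of u t x, OF that] assms(4)[OF that(1)] by linarith
qed

lemma IOSI:
  assumes "class_KL \<beta>" "class_K \<gamma>"
    and "\<And>x u t. u \<in> Uc \<Longrightarrow> t \<in> time_set disc \<Longrightarrow>
      norm (out \<phi> h t x u) \<le> \<beta> (norm x) t + \<gamma> (nU u)"
    and "\<And>u. u \<in> Uc \<Longrightarrow> 0 \<le> nU u"
  shows "IOS disc Uc nU \<phi> h"
  unfolding IOS_def
proof (intro exI conjI ballI allI)
  show "class_KL \<beta>" "class_Kinf (\<lambda>v. \<gamma> v + v)"
    using assms(1,2) class_Kinf_add_id by auto
  show "norm (out \<phi> h t x u) \<le> \<beta> (norm x) t + (\<gamma> (nU u) + nU u)"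
    if "u \<in> Uc" "t \<in> time_set disc" for x u t
    using assms(3)[of u t x, OF that] assms(4)[OF that(1)] by linarith
qed

locale control_system_with_output =
  fixes disc :: bool
    and Uc :: "(real \<Rightarrow> 'u::real_vector) set"
    and nU :: "(real \<Rightarrow> 'u) \<Rightarrow> real"
    and \<phi> :: "real \<Rightarrow> 'x::real_normed_vector \<Rightarrow> (real \<Rightarrow> 'u) \<Rightarrow> 'x"
    and h :: "'x \<Rightarrow> 'u \<Rightarrow> 'y::real_normed_vector"
  assumes control_system: "control_system disc Uc nU \<phi>"
begin

lemma input_norm_nonneg: "u \<in> Uc \<Longrightarrow> 0 \<le> nU u"
  using control_system unfolding control_system_def by (elim conjE) metis

lemma shift_inp_mem: "u \<in> Uc \<Longrightarrow> \<tau> \<in> time_set disc \<Longrightarrow> shift_inp disc u \<tau> \<in> Uc"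
  using control_system unfolding control_system_def by (elim conjE) metis

lemma shift_inp_norm_le: "u \<in> Uc \<Longrightarrow> \<tau> \<in> time_set disc \<Longrightarrow> nU (shift_inp disc u \<tau>) \<le> nU u"
  using control_system unfolding control_system_def by (elim conjE) metis

lemma restr_inp_mem: "u \<in> Uc \<Longrightarrow> 0 \<le> t \<Longrightarrow> restr_inp u 0 t \<in> Uc"
  using control_system unfolding control_system_def by (elim conjE) metis

lemma restr_inp_norm_le: "u \<in> Uc \<Longrightarrow> 0 \<le> t \<Longrightarrow> nU (restr_inp u 0 t) \<le> nU u"
  using control_system unfolding control_system_def by (elim conjE) metis

lemma flow_0: "u \<in> Uc \<Longrightarrow> \<phi> 0 x u = x"
  using control_system unfolding control_system_def by (elim conjE) metis

lemma flow_causal: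
  "t \<in> time_set disc \<Longrightarrow> u \<in> Uc \<Longrightarrow> v \<in> Uc \<Longrightarrow>
    (\<And>s. s \<in> time_set disc \<Longrightarrow> s \<le> t \<Longrightarrow> u s = v s) \<Longrightarrow> \<phi> t x u = \<phi> t x v"
  using control_system unfolding control_system_def by (elim conjE) metis

lemma flow_cocycle:
  "t \<in> time_set disc \<Longrightarrow> s \<in> time_set disc \<Longrightarrow> u \<in> Uc \<Longrightarrow>
    \<phi> (t + s) x u = \<phi> s (\<phi> t x u) (shift_inp disc u t)"
  using control_system unfolding control_system_def by (elim conjE) metis

lemma out_cocycle:
  "t \<in> time_set disc \<Longrightarrow> s \<in> time_set disc \<Longrightarrow> u \<in> Uc \<Longrightarrow>
    out \<phi> h (t + s) x u = out \<phi> h s (\<phi> t x u) (shift_inp disc u t)"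
  using flow_cocycle[of t s u x] shift_inp_apply[of s disc u t] by (simp add: out_def add.commute)

lemma flow_restr_inp: "t \<in> time_set disc \<Longrightarrow> u \<in> Uc \<Longrightarrow> \<phi> t x (restr_inp u 0 t) = \<phi> t x u"
  using flow_causal[of t "restr_inp u 0 t" u] restr_inp_mem time_set_nonneg
  by (auto simp: restr_inp_def)

lemma IOS_if_ISS_K_bounded:
  assumes "ISS disc Uc nU \<phi>" and "K_bounded Uc nU h"
  shows "IOS disc Uc nU \<phi> h"
proof -
  obtain \<beta> \<gamma> where \<beta>: "class_KL \<beta>" and \<gamma>: "class_K \<gamma>"
    and ISS: "\<And>x u t. u \<in> Uc \<Longrightarrow> t \<in> time_set disc \<Longrightarrow> norm (\<phi> t x u) \<le> \<beta> (norm x) t + \<gamma> (nU u)"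
    using assms(1) unfolding ISS_def class_Kinf_def by blast
  obtain \<sigma> \<gamma>1 where \<sigma>: "class_K \<sigma>" and \<gamma>1: "class_K \<gamma>1"
    and bounded: "\<And>x u. u \<in> Uc \<Longrightarrow> norm (h x (u 0)) \<le> \<sigma> (norm x) + \<gamma>1 (nU u)"
    using assms(2) unfolding K_bounded_def by blast
  have \<sigma>2: "class_K (\<lambda>s. \<sigma> (2 * s))"
    using class_K_comp[OF \<sigma> class_K_cmult] by simp
  show ?thesis
  proof (rule IOSI[OF class_KL_comp_K_outer[OF \<sigma>2 \<beta>] class_K_add[OF class_K_comp[OF \<sigma>2 \<gamma>] \<gamma>1]])
    fix x u t assume u: "u \<in> Uc" and t: "t \<in> time_set disc"
    define w where "w = shift_inp disc u t"
    have w: "w \<in> Uc" "nU w \<le> nU u"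
      using shift_inp_mem[OF u t] shift_inp_norm_le[OF u t] by (auto simp: w_def)
    have "norm (out \<phi> h t x u) = norm (h (\<phi> t x u) (w 0))"
      by (simp add: out_def w_def shift_inp_apply[OF zero_in_time_set])
    also have "\<dots> \<le> \<sigma> (norm (\<phi> t x u)) + \<gamma>1 (nU w)"
      using bounded[OF w(1)] .
    also have "\<dots> \<le> \<sigma> (\<beta> (norm x) t + \<gamma> (nU u)) + \<gamma>1 (nU u)"
      using class_K_le[OF \<sigma> _ ISS[OF u t]] class_K_le[OF \<gamma>1 input_norm_nonneg[OF w(1)] w(2)]
      by (intro add_mono) auto
    also have "\<dots> \<le> \<sigma> (2 * \<beta> (norm x) t) + (\<sigma> (2 * \<gamma> (nU u)) + \<gamma>1 (nU u))"
      using class_K_weak_triangle[OF \<sigma> class_KL_nonneg[OF \<beta> _ time_set_nonneg[OF t]]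
          class_K_nonneg[OF \<gamma> input_norm_nonneg[OF u]]]
      by simp
    finally show "norm (out \<phi> h t x u) \<le> \<sigma> (2 * \<beta> (norm x) t) + (\<sigma> (2 * \<gamma> (nU u)) + \<gamma>1 (nU u))" .
  qed (rule input_norm_nonneg)
qed

lemma IOSS_if_ISS:
  assumes "ISS disc Uc nU \<phi>"
  shows "IOSS disc Uc nU \<phi> h"
proof -
  obtain \<beta> \<gamma> where \<beta>: "class_KL \<beta>" and \<gamma>: "class_K \<gamma>"
    and ISS: "\<And>x u t. u \<in> Uc \<Longrightarrow> t \<in> time_set disc \<Longrightarrow> norm (\<phi> t x u) \<le> \<beta> (norm x) t + \<gamma> (nU u)"
    using assms unfolding ISS_def class_Kinf_def by blast
  show ?thesis
    unfolding IOSS_def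
  proof (intro exI conjI ballI allI impI)
    show "class_KL \<beta>" "class_K \<gamma>" "class_K (\<lambda>s. s)"
      using \<beta> \<gamma> class_K_id by auto
    fix x u t assume u: "u \<in> Uc" and t: "t \<in> time_set disc"
      and bdd: "bdd_above ((\<lambda>s. norm (out \<phi> h s x u)) ` {s \<in> time_set disc. s \<le> t})"
    have "norm (\<phi> t x u) \<le> \<beta> (norm x) t + \<gamma> (nU (restr_inp u 0 t))"
      using ISS[OF restr_inp_mem[OF u time_set_nonneg[OF t]] t] flow_restr_inp[OF t u] by simp
    moreover have "0 \<le> (SUP s\<in>{s \<in> time_set disc. s \<le> t}. norm (out \<phi> h s x u))"
      using cSUP_upper2[OF bdd, of t] t by auto
    ultimately show "norm (\<phi> t x u) \<le> \<beta> (norm x) t + \<gamma> (nU (restr_inp u 0 t))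
        + (SUP s\<in>{s \<in> time_set disc. s \<le> t}. norm (out \<phi> h s x u))"
      by simp
  qed
qed

lemma K_bounded_if_IOS:
  assumes "IOS disc Uc nU \<phi> h"
  shows "K_bounded Uc nU h"
proof -
  obtain \<beta> \<gamma> where \<beta>: "class_KL \<beta>" and \<gamma>: "class_K \<gamma>"
    and IOS: "\<And>x u t. u \<in> Uc \<Longrightarrow> t \<in> time_set disc \<Longrightarrow>
      norm (out \<phi> h t x u) \<le> \<beta> (norm x) t + \<gamma> (nU u)"
    using assms unfolding IOS_def class_Kinf_def by blast
  have "norm (h x (u 0)) \<le> \<beta> (norm x) 0 + \<gamma> (nU u)" if "u \<in> Uc" for x u
    using IOS[OF that zero_in_time_set, of x] by (simp add: out_def flow_0[OF that])
  then show ?thesis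
    unfolding K_bounded_def using class_KL_K[OF \<beta> order_refl] \<gamma> by blast
qed

end

locale IOS_IOSS_estimates = control_system_with_output +
  fixes \<beta>y \<beta> :: "real \<Rightarrow> real \<Rightarrow> real" and \<gamma>y \<gamma>1 \<gamma>2 :: "real \<Rightarrow> real"
  assumes KL_\<beta>y: "class_KL \<beta>y" and K_\<gamma>y: "class_K \<gamma>y"
    and IOS_estimate: "\<And>x u t. u \<in> Uc \<Longrightarrow> t \<in> time_set disc \<Longrightarrow>
      norm (out \<phi> h t x u) \<le> \<beta>y (norm x) t + \<gamma>y (nU u)"
    and KL_\<beta>: "class_KL \<beta>" and K_\<gamma>1: "class_K \<gamma>1" and K_\<gamma>2: "class_K \<gamma>2"
    and IOSS_estimate: "\<And>x u t. u \<in> Uc \<Longrightarrow> t \<in> time_set disc \<Longrightarrow>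
      bdd_above ((\<lambda>s. norm (out \<phi> h s x u)) ` {s \<in> time_set disc. s \<le> t}) \<Longrightarrow>
      norm (\<phi> t x u) \<le> \<beta> (norm x) t + \<gamma>1 (nU (restr_inp u 0 t))
        + \<gamma>2 (SUP s\<in>{s \<in> time_set disc. s \<le> t}. norm (out \<phi> h s x u))"
begin

lemma output_bound_after:
  assumes "u \<in> Uc" "0 \<le> t0" "s \<in> time_set disc" "t0 \<le> s"
  shows "norm (out \<phi> h s x u) \<le> \<beta>y (norm x) t0 + \<gamma>y (nU u)"
  using IOS_estimate[OF assms(1,3), of x] class_KL_antimono[OF KL_\<beta>y norm_ge_zero[of x] assms(2,4)]
  by linarith

lemma state_bound_if_output_bound:
  assumes u: "u \<in> Uc" and t: "t \<in> time_set disc"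
    and output_bound: "\<And>s. s \<in> time_set disc \<Longrightarrow> s \<le> t \<Longrightarrow> norm (out \<phi> h s x u) \<le> B"
  shows "norm (\<phi> t x u) \<le> \<beta> (norm x) t + \<gamma>1 (nU u) + \<gamma>2 B"
proof -
  let ?S = "{s \<in> time_set disc. s \<le> t}"
  let ?sup = "SUP s\<in>?S. norm (out \<phi> h s x u)"
  have bdd: "bdd_above ((\<lambda>s. norm (out \<phi> h s x u)) ` ?S)"
    using output_bound by (auto intro!: bdd_aboveI)
  have "0 \<le> ?sup"
    using cSUP_upper2[OF bdd, of t] t by auto
  moreover have "?sup \<le> B"
    using t output_bound by (intro cSUP_least) auto
  ultimately have "\<gamma>2 ?sup \<le> \<gamma>2 B"
    using class_K_le[OF K_\<gamma>2] by blast
  moreover have "\<gamma>1 (nU (restr_inp u 0 t)) \<le> \<gamma>1 (nU u)"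
    using class_K_le[OF K_\<gamma>1] input_norm_nonneg restr_inp_mem restr_inp_norm_le u
      time_set_nonneg[OF t]
    by blast
  ultimately show ?thesis
    using IOSS_estimate[OF u t bdd] by linarith
qed

definition overshoot :: "real \<Rightarrow> real" where
  "overshoot r = \<beta> r 0 + \<gamma>2 (2 * \<beta>y r 0)"

definition input_gain :: "real \<Rightarrow> real" where
  "input_gain v = \<gamma>1 v + \<gamma>2 (2 * \<gamma>y v)"

lemma class_K_overshoot: "class_K overshoot"
  unfolding overshoot_def
  using class_K_add[OF class_KL_K[OF KL_\<beta>] class_K_comp[OF K_\<gamma>2 class_K_comp[OF class_K_cmult class_KL_K[OF KL_\<beta>y]]]]
  by simp

lemma class_K_input_gain: "class_K input_gain"
  unfolding input_gain_def
  using class_K_add[OF K_\<gamma>1 class_K_comp[OF K_\<gamma>2 class_K_comp[OF class_K_cmult K_\<gamma>y]]]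
  by simp

lemma uniform_state_bound:
  assumes u: "u \<in> Uc" and t: "t \<in> time_set disc"
  shows "norm (\<phi> t x u) \<le> overshoot (norm x) + input_gain (nU u)"
proof -
  have "norm (out \<phi> h s x u) \<le> \<beta>y (norm x) 0 + \<gamma>y (nU u)" if "s \<in> time_set disc" for s
    using output_bound_after[OF u order_refl that time_set_nonneg[OF that]] .
  then have "norm (\<phi> t x u) \<le> \<beta> (norm x) t + \<gamma>1 (nU u) + \<gamma>2 (\<beta>y (norm x) 0 + \<gamma>y (nU u))"
    by (rule state_bound_if_output_bound[OF u t])
  moreover have "\<beta> (norm x) t \<le> \<beta> (norm x) 0"
    using class_KL_antimono[OF KL_\<beta> norm_ge_zero order_refl time_set_nonneg[OF t]] .
  moreover have "\<gamma>2 (\<beta>y (norm x) 0 + \<gamma>y (nU u)) \<le> \<gamma>2 (2 * \<beta>y (norm x) 0) + \<gamma>2 (2 * \<gamma>y (nU u))"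
    using class_K_weak_triangle[OF K_\<gamma>2 class_KL_nonneg[OF KL_\<beta>y] class_K_nonneg[OF K_\<gamma>y]]
      input_norm_nonneg[OF u] by simp
  ultimately show ?thesis
    unfolding overshoot_def input_gain_def by linarith
qed

lemma decaying_state_bound:
  assumes u: "u \<in> Uc" and t: "t \<in> time_set disc"
  shows "norm (\<phi> t x u) \<le>
    \<beta> (2 * overshoot (norm x)) (half_time t) + \<gamma>2 (2 * \<beta>y (norm x) (half_time t))
    + (\<beta> (2 * input_gain (nU u)) 0 + input_gain (nU u))"
proof -
  define \<tau> where "\<tau> = half_time t"
  define z where "z = \<phi> \<tau> x u"
  define w where "w = shift_inp disc u \<tau>"
  have \<tau>: "\<tau> \<in> time_set disc" and s: "t - \<tau> \<in> time_set disc" and "\<tau> \<le> t - \<tau>"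
    using half_time_in_time_set[OF t] half_time_bounds[OF time_set_nonneg[OF t]]
    by (auto simp: \<tau>_def)
  have \<tau>_nonneg: "0 \<le> \<tau>"
    using time_set_nonneg[OF \<tau>] .
  have w: "w \<in> Uc" "nU w \<le> nU u"
    using shift_inp_mem[OF u \<tau>] shift_inp_norm_le[OF u \<tau>] by (auto simp: w_def)
  have "norm (out \<phi> h q z w) \<le> \<beta>y (norm x) \<tau> + \<gamma>y (nU u)" if "q \<in> time_set disc" for q
    using out_cocycle[OF \<tau> that u, of x] time_set_nonneg[OF that]
      output_bound_after[OF u \<tau>_nonneg time_set_add[OF \<tau> that], of x]
    by (simp add: z_def w_def)
  then have "norm (\<phi> (t - \<tau>) z w) \<le> \<beta> (norm z) (t - \<tau>) + \<gamma>1 (nU w) + \<gamma>2 (\<beta>y (norm x) \<tau> + \<gamma>y (nU u))"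
    by (rule state_bound_if_output_bound[OF w(1) s])
  then have "norm (\<phi> t x u) \<le> \<beta> (norm z) (t - \<tau>) + \<gamma>1 (nU w) + \<gamma>2 (\<beta>y (norm x) \<tau> + \<gamma>y (nU u))"
    using flow_cocycle[OF \<tau> s u, of x] by (simp add: z_def w_def)
  moreover have "\<beta> (norm z) (t - \<tau>) \<le> \<beta> (2 * overshoot (norm x)) \<tau> + \<beta> (2 * input_gain (nU u)) 0"
    using class_KL_split_le[OF KL_\<beta> norm_ge_zero _ class_K_nonneg[OF class_K_overshoot norm_ge_zero]
        class_K_nonneg[OF class_K_input_gain input_norm_nonneg[OF u]] \<tau>_nonneg \<open>\<tau> \<le> t - \<tau>\<close>]
      uniform_state_bound[OF u \<tau>, of x]
    by (simp add: z_def)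
  moreover have "\<gamma>1 (nU w) \<le> \<gamma>1 (nU u)"
    using class_K_le[OF K_\<gamma>1 input_norm_nonneg[OF w(1)] w(2)] .
  moreover have "\<gamma>2 (\<beta>y (norm x) \<tau> + \<gamma>y (nU u)) \<le> \<gamma>2 (2 * \<beta>y (norm x) \<tau>) + \<gamma>2 (2 * \<gamma>y (nU u))"
    using class_K_weak_triangle[OF K_\<gamma>2 class_KL_nonneg[OF KL_\<beta>y norm_ge_zero \<tau>_nonneg]
        class_K_nonneg[OF K_\<gamma>y input_norm_nonneg[OF u]]] .
  ultimately show ?thesis
    unfolding \<tau>_def input_gain_def by linarith
qed

lemma ISS: "ISS disc Uc nU \<phi>"
proof (rule ISSI)
  show "class_KL (\<lambda>r t. \<beta> (2 * overshoot r) (half_time t) + \<gamma>2 (2 * \<beta>y r (half_time t)))"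
  proof (rule class_KL_add)
    have half_time_KL: "class_KL (\<lambda>r t. b r (half_time t))" if "class_KL b" for b
      by (rule class_KL_reparam_time[OF that half_time_bounds(1) half_time_mono filterlim_half_time])
    show "class_KL (\<lambda>r t. \<beta> (2 * overshoot r) (half_time t))"
      using class_KL_comp_K_inner[OF class_K_comp[OF class_K_cmult class_K_overshoot] half_time_KL[OF KL_\<beta>]]
      by simp
    show "class_KL (\<lambda>r t. \<gamma>2 (2 * \<beta>y r (half_time t)))"
      using class_KL_comp_K_outer[OF class_K_comp[OF K_\<gamma>2 class_K_cmult] half_time_KL[OF KL_\<beta>y]]
      by simp
  qed
  show "class_K (\<lambda>v. \<beta> (2 * input_gain v) 0 + input_gain v)"
    using class_K_add[OF class_K_comp[OF class_KL_K[OF KL_\<beta> order_refl]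
          class_K_comp[OF class_K_cmult class_K_input_gain]] class_K_input_gain]
    by simp
qed (use decaying_state_bound input_norm_nonneg in auto)

end

context control_system_with_output
begin

lemma ISS_if_IOS_IOSS:
  assumes "IOS disc Uc nU \<phi> h" and "IOSS disc Uc nU \<phi> h"
  shows "ISS disc Uc nU \<phi>"
proof -
  obtain \<beta>y \<gamma>y where "class_KL \<beta>y" "class_K \<gamma>y"
    "\<forall>x. \<forall>u\<in>Uc. \<forall>t\<in>time_set disc. norm (out \<phi> h t x u) \<le> \<beta>y (norm x) t + \<gamma>y (nU u)"
    using assms(1) unfolding IOS_def class_Kinf_def by blast
  moreover obtain \<beta> \<gamma>1 \<gamma>2 where "class_KL \<beta>" "class_K \<gamma>1" "class_K \<gamma>2"
    "\<forall>x. \<forall>u\<in>Uc. \<forall>t\<in>time_set disc.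
      bdd_above ((\<lambda>s. norm (out \<phi> h s x u)) ` {s \<in> time_set disc. s \<le> t}) \<longrightarrow>
      norm (\<phi> t x u) \<le> \<beta> (norm x) t + \<gamma>1 (nU (restr_inp u 0 t))
        + \<gamma>2 (SUP s\<in>{s \<in> time_set disc. s \<le> t}. norm (out \<phi> h s x u))"
    using assms(2) unfolding IOSS_def by (elim exE conjE) (rule that)
  ultimately interpret IOS_IOSS_estimates disc Uc nU \<phi> h \<beta>y \<beta> \<gamma>y \<gamma>1 \<gamma>2
    by unfold_locales blast+
  show ?thesis
    by (rule ISS)
qed

end

theorem proposition6:
  fixes disc :: bool
    and Uc :: "(real \<Rightarrow> 'u::real_vector) set"
    and nU :: "(real \<Rightarrow> 'u) \<Rightarrow> real"
    and \<phi> :: "real \<Rightarrow> 'x::real_normed_vector \<Rightarrow> (real \<Rightarrow> 'u) \<Rightarrow> 'x"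
    and h :: "'x \<Rightarrow> 'u \<Rightarrow> 'y::real_normed_vector"
  assumes "control_system disc Uc nU \<phi>"
  shows "(ISS disc Uc nU \<phi> \<and> K_bounded Uc nU h) \<longleftrightarrow>
         (IOS disc Uc nU \<phi> h \<and> IOSS disc Uc nU \<phi> h)"
proof -
  interpret control_system_with_output disc Uc nU \<phi> h
    by (rule control_system_with_output.intro) (fact assms)
  show ?thesis
    using IOS_if_ISS_K_bounded IOSS_if_ISS K_bounded_if_IOS ISS_if_IOS_IOSS by blast
qed

end
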